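(* Let $A$ be a T-brace and let $a\in\zeta_2(\star,A)$. If $a$ has infinite order in $(A,+)$, then $x\star a\in\langle a\star a\rangle$ and $a\star x\in\langle a\star a\rangle$ for all $x\in A$, where $\langle a\star a\rangle$ denotes the cyclic subgroup of $(A,+)$ generated by $a\star a$.
   Context: A (left) brace is a set $A$ with two operations $+$ and $\cdot$ such that $(A,+)$ is an abelian group, $(A,\cdot)$ is a group, and $a(b+c)=ab+ac-a$ for all $a,b,c\in A$. Put $a\star b=ab-a-b$. A subbrace is a subset which is a subgroup of both $(A,+)$ and $(A,\cdot)$; a subbrace $L$ is an ideal if $a\star z, z\star a\in L$ for all $a\in A$, $z\in L$, and then the quotient brace $A/L$ is defined. $A$ is a T-brace if whenever $I$ is an ideal of $J$ and $J$ is an ideal of $A$, then $I$ is an ideal of $A$. The $\star$-center is $\zeta(\star,A)=\{a: a\star x=x\star a=0\ \forall x\}$; $\zeta_2(\star,A)$ is given by $\zeta_2(\star,A)/\zeta(\star,A)=\zeta(\star,A/\zeta(\star,A))$. *)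

theory Defs
  imports Main
begin

text \<open>A (left) brace on the whole type 'a: the additive group is the ambient
  abelian group structure of 'a (class ab_group_add), the multiplicative
  group is given by the operation m.\<close>

definition mul_one :: "('a \<Rightarrow> 'a \<Rightarrow> 'a) \<Rightarrow> 'a" where
  "mul_one m = (THE e. \<forall>a. m e a = a \<and> m a e = a)"

definition brace :: "('a::ab_group_add \<Rightarrow> 'a \<Rightarrow> 'a) \<Rightarrow> bool" where
  "brace m \<longleftrightarrow>
     (\<forall>a b c. m (m a b) c = m a (m b c)) \<and>
     (\<exists>e. (\<forall>a. m e a = a \<and> m a e = a) \<and> (\<forall>a. \<exists>b. m a b = e \<and> m b a = e)) \<and>
     (\<forall>a b c. m a (b + c) = m a b + m a c - a)"

definition star :: "('a::ab_group_add \<Rightarrow> 'a \<Rightarrow> 'a) \<Rightarrow> 'a \<Rightarrow> 'a \<Rightarrow> 'a" where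
  "star m a b = m a b - a - b"

definition subbrace :: "('a::ab_group_add \<Rightarrow> 'a \<Rightarrow> 'a) \<Rightarrow> 'a set \<Rightarrow> bool" where
  "subbrace m S \<longleftrightarrow>
     0 \<in> S \<and> (\<forall>x\<in>S. \<forall>y\<in>S. x + y \<in> S) \<and> (\<forall>x\<in>S. - x \<in> S) \<and>
     mul_one m \<in> S \<and> (\<forall>x\<in>S. \<forall>y\<in>S. m x y \<in> S) \<and>
     (\<forall>x\<in>S. \<exists>y\<in>S. m x y = mul_one m \<and> m y x = mul_one m)"

definition ideal_of :: "('a::ab_group_add \<Rightarrow> 'a \<Rightarrow> 'a) \<Rightarrow> 'a set \<Rightarrow> 'a set \<Rightarrow> bool" where
  "ideal_of m J I \<longleftrightarrow> I \<subseteq> J \<and> subbrace m I \<and>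
     (\<forall>a\<in>J. \<forall>z\<in>I. star m a z \<in> I \<and> star m z a \<in> I)"

definition T_brace :: "('a::ab_group_add \<Rightarrow> 'a \<Rightarrow> 'a) \<Rightarrow> bool" where
  "T_brace m \<longleftrightarrow> brace m \<and>
     (\<forall>I J. ideal_of m J I \<and> ideal_of m UNIV J \<longrightarrow> ideal_of m UNIV I)"

definition star_center :: "('a::ab_group_add \<Rightarrow> 'a \<Rightarrow> 'a) \<Rightarrow> 'a set" where
  "star_center m = {a. \<forall>x. star m a x = 0 \<and> star m x a = 0}"

text \<open>Second star-center: preimage of the star-center of A / star_center,
  unfolded: in the quotient by the ideal Z, (a+Z) star (x+Z) = (a star x) + Z
  and the zero is Z.\<close>
definition star_center2 :: "('a::ab_group_add \<Rightarrow> 'a \<Rightarrow> 'a) \<Rightarrow> 'a set" where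
  "star_center2 m = {a. \<forall>x. star m a x \<in> star_center m \<and> star m x a \<in> star_center m}"

definition nsmul :: "nat \<Rightarrow> 'a::ab_group_add \<Rightarrow> 'a" where
  "nsmul n x = (((+) x) ^^ n) 0"

definition zsmul :: "int \<Rightarrow> 'a::ab_group_add \<Rightarrow> 'a" where
  "zsmul k x = (if 0 \<le> k then nsmul (nat k) x else - nsmul (nat (- k)) x)"

definition add_cyclic :: "'a::ab_group_add \<Rightarrow> 'a set" where
  "add_cyclic x = {zsmul k x | k. True}"

definition infinite_add_order :: "'a::ab_group_add \<Rightarrow> bool" where
  "infinite_add_order x \<longleftrightarrow> (\<forall>n::nat. 0 < n \<longrightarrow> nsmul n x \<noteq> 0)"

end

theory Submission
  imports Defs "HOL-Library.Set_Algebras"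
begin

text \<open>Let c = a \<star> a and J = \<langle>a\<rangle> + \<zeta>. Since a lies in the second star-center,
  which contains J, all stars between elements of J lie in \<langle>c\<rangle>; hence I = \<langle>a\<rangle> + \<langle>c\<rangle>
  is an ideal of J, while J is an ideal of A because it lies between the star-center \<zeta>
  and the second star-center. The T-property makes I an ideal of A, so x \<star> a and a \<star> x
  lie in I \<inter> \<zeta>. Write such an element as d = n a + r c. Then n a \<in> \<zeta>, hence
  n c = a \<star> (n a) = 0 and n d = 0, as the star is additive in each argument against
  elements of the second star-center. Thus n^2 a = 0, so n = 0 because a has infinite
  order, and d = r c.\<close>

section \<open>Integer multiples and additive subgroups\<close>

lemma nsmul_0 [simp]: "nsmul 0 x = 0"
  by (simp add: nsmul_def)

lemma nsmul_Suc [simp]: "nsmul (Suc n) x = x + nsmul n x"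
  by (simp add: nsmul_def)

lemma zsmul_0 [simp]: "zsmul 0 x = 0"
  by (simp add: zsmul_def)

lemma zsmul_1 [simp]: "zsmul 1 x = x"
  by (simp add: zsmul_def)

lemma zsmul_plus_1: "zsmul (k + 1) x = x + zsmul k x"
proof (cases "0 \<le> k")
  case True
  then have "nat (k + 1) = Suc (nat k)" by simp
  with True show ?thesis by (simp add: zsmul_def)
next
  case False
  then consider "k = -1" | "nat (- k) = Suc (nat (- (k + 1)))" "\<not> 0 \<le> k + 1" by linarith
  then show ?thesis
    by cases (use False in \<open>simp_all add: zsmul_def\<close>)
qed

lemma zsmul_minus_1: "zsmul (k - 1) x = zsmul k x - x"
  using zsmul_plus_1 [of "k - 1" x] by (simp add: algebra_simps)

lemma zsmul_add: "zsmul (k + l) x = zsmul k x + zsmul l x"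
proof (induction l rule: int_induct [where k = 0])
  case (step1 i)
  then show ?case
    using zsmul_plus_1 [of "k + i" x] zsmul_plus_1 [of i x] by (simp add: algebra_simps)
next
  case (step2 i)
  have "zsmul (k + (i - 1)) x = zsmul (k + i) x - x"
    by (metis add_diff_eq zsmul_minus_1)
  with step2 show ?case
    by (simp add: zsmul_minus_1)
qed simp

lemma zsmul_uminus: "zsmul (- k) x = - zsmul k x"
  using zsmul_add [of k "- k" x] by (simp add: minus_unique)

lemma zsmul_mult: "zsmul (k * l) x = zsmul k (zsmul l x)"
proof (induction k rule: int_induct [where k = 0])
  case (step1 i)
  then show ?case
    using zsmul_add [of "i * l" l x] zsmul_plus_1 [of i "zsmul l x"] by (simp add: algebra_simps)
next
  case (step2 i)
  have "zsmul ((i - 1) * l) x = zsmul (i * l) x - zsmul l x"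
    using zsmul_add [of "i * l" "- l" x] by (simp add: algebra_simps zsmul_uminus)
  with step2 show ?case
    by (simp add: zsmul_minus_1)
qed simp

lemma zsmul_add_right: "zsmul k (x + y) = zsmul k x + zsmul k y"
  by (induction k rule: int_induct [where k = 0]) (simp_all add: zsmul_plus_1 zsmul_minus_1 algebra_simps)

lemma zsmul_0_right [simp]: "zsmul k 0 = 0"
  using zsmul_add_right [of k 0 0] by simp

definition add_subgroup :: "'a::ab_group_add set \<Rightarrow> bool" where
  "add_subgroup S \<longleftrightarrow> 0 \<in> S \<and> (\<forall>x\<in>S. \<forall>y\<in>S. x + y \<in> S) \<and> (\<forall>x\<in>S. - x \<in> S)"

lemma add_subgroupI:
  assumes "0 \<in> S" "\<And>x y. x \<in> S \<Longrightarrow> y \<in> S \<Longrightarrow> x + y \<in> S" "\<And>x. x \<in> S \<Longrightarrow> - x \<in> S"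
  shows "add_subgroup S"
  using assms by (simp add: add_subgroup_def)

lemma add_subgroup_zero: "add_subgroup S \<Longrightarrow> 0 \<in> S"
  and add_subgroup_add: "add_subgroup S \<Longrightarrow> x \<in> S \<Longrightarrow> y \<in> S \<Longrightarrow> x + y \<in> S"
  and add_subgroup_uminus: "add_subgroup S \<Longrightarrow> x \<in> S \<Longrightarrow> - x \<in> S"
  by (simp_all add: add_subgroup_def)

lemma add_subgroup_diff: "add_subgroup S \<Longrightarrow> x \<in> S \<Longrightarrow> y \<in> S \<Longrightarrow> x - y \<in> S"
  using add_subgroup_add [of S x "- y"] add_subgroup_uminus [of S y] by simp

lemma zsmul_closed:
  assumes "add_subgroup S" "x \<in> S"
  shows "zsmul k x \<in> S"
proof (induction k rule: int_induct [where k = 0])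
  case base
  show ?case using assms by (simp add: add_subgroup_zero)
next
  case (step1 i)
  then show ?case using assms by (simp add: zsmul_plus_1 add_subgroup_add)
next
  case (step2 i)
  then show ?case
    using add_subgroup_diff [OF assms(1) _ assms(2)] by (simp add: zsmul_minus_1)
qed

lemma zsmul_additive:
  assumes S: "add_subgroup S" "u \<in> S"
    and f: "\<And>x y. x \<in> S \<Longrightarrow> y \<in> S \<Longrightarrow> f (x + y) = f x + f y"
  shows "f (zsmul k u) = zsmul k (f u)"
proof -
  have f0: "f 0 = 0"
    using f [of 0 0] add_subgroup_zero [OF S(1)] by simp
  have f_diff: "f (x - u) = f x - f u" if "x \<in> S" for x
  proof -
    have "x - u \<in> S"
      using add_subgroup_diff [OF S(1) that S(2)] .
    then show ?thesis
      using f [of "x - u" u] S(2) by (simp add: eq_diff_eq)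
  qed
  show ?thesis
  proof (induction k rule: int_induct [where k = 0])
    case (step1 i)
    then show ?case
      using f [of u "zsmul i u"] S(2) zsmul_closed [OF S] by (simp add: zsmul_plus_1)
  next
    case (step2 i)
    then show ?case
      using f_diff [of "zsmul i u"] zsmul_closed [OF S] by (simp add: zsmul_minus_1)
  qed (simp add: f0)
qed

lemma zsmul_eq_0_iff_infinite_add_order:
  assumes "infinite_add_order x"
  shows "zsmul k x = 0 \<longleftrightarrow> k = 0"
proof
  assume "zsmul k x = 0"
  then have "nsmul (nat \<bar>k\<bar>) x = 0"
    by (cases "0 \<le> k") (simp_all add: zsmul_def)
  with assms have "\<not> 0 < nat \<bar>k\<bar>"
    unfolding infinite_add_order_def by blast
  then show "k = 0"
    by simp
qed simp

lemma zsmul_mem_add_cyclic [intro]: "zsmul k x \<in> add_cyclic x"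
  by (auto simp: add_cyclic_def)

lemma add_subgroup_add_cyclic: "add_subgroup (add_cyclic x)"
proof (rule add_subgroupI)
  show "0 \<in> add_cyclic x"
    using zsmul_mem_add_cyclic [of 0 x] by simp
next
  fix y z assume "y \<in> add_cyclic x" "z \<in> add_cyclic x"
  then obtain k l where "y = zsmul k x" "z = zsmul l x"
    by (auto simp: add_cyclic_def)
  then show "y + z \<in> add_cyclic x"
    using zsmul_mem_add_cyclic [of "k + l" x] by (simp add: zsmul_add)
next
  fix y assume "y \<in> add_cyclic x"
  then obtain k where "y = zsmul k x"
    by (auto simp: add_cyclic_def)
  then show "- y \<in> add_cyclic x"
    using zsmul_mem_add_cyclic [of "- k" x] by (simp add: zsmul_uminus)
qed

lemma mem_add_cyclic_self: "x \<in> add_cyclic x"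
  using zsmul_mem_add_cyclic [of 1 x] by simp

lemma add_cyclic_subset:
  assumes "add_subgroup S" "x \<in> S"
  shows "add_cyclic x \<subseteq> S"
  using zsmul_closed [OF assms] by (auto simp: add_cyclic_def)

lemma add_subgroup_set_plus:
  assumes A: "add_subgroup A" and B: "add_subgroup B"
  shows "add_subgroup (A + B)"
proof (rule add_subgroupI)
  show "0 \<in> A + B"
    using set_plus_intro [OF add_subgroup_zero [OF A] add_subgroup_zero [OF B]] by simp
next
  fix x y assume "x \<in> A + B" "y \<in> A + B"
  then obtain a b a' b' where "x = a + b" "y = a' + b'" "a \<in> A" "b \<in> B" "a' \<in> A" "b' \<in> B"
    by (meson set_plus_elim)
  then show "x + y \<in> A + B"
    using set_plus_intro [of "a + a'" A "b + b'" B] A B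
    by (simp add: add_subgroup_add algebra_simps)
next
  fix x assume "x \<in> A + B"
  then obtain a b where "x = a + b" "a \<in> A" "b \<in> B"
    by (rule set_plus_elim)
  then show "- x \<in> A + B"
    using set_plus_intro [of "- a" A "- b" B] A B by (simp add: add_subgroup_uminus)
qed

lemma set_plus_subset:
  assumes "add_subgroup S" "A \<subseteq> S" "B \<subseteq> S"
  shows "A + B \<subseteq> S"
  using assms by (auto elim!: set_plus_elim intro: add_subgroup_add)

section \<open>The star-centers of a left brace\<close>

locale left_brace =
  fixes m :: "'a::ab_group_add \<Rightarrow> 'a \<Rightarrow> 'a"
  assumes brace: "brace m"
begin

abbreviation mult (infixl "\<cdot>" 70) where "x \<cdot> y \<equiv> m x y"
abbreviation star_op (infixl "\<star>" 70) where "x \<star> y \<equiv> star m x y"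
abbreviation \<zeta> where "\<zeta> \<equiv> star_center m"
abbreviation \<zeta>\<^sub>2 where "\<zeta>\<^sub>2 \<equiv> star_center2 m"

lemma mult_assoc: "a \<cdot> b \<cdot> c = a \<cdot> (b \<cdot> c)"
  using brace unfolding brace_def by blast

lemma mult_add_right: "a \<cdot> (b + c) = a \<cdot> b + a \<cdot> c - a"
  using brace unfolding brace_def by blast

lemma mult_0_right: "a \<cdot> 0 = a"
  using mult_add_right [of a 0 0] by simp

lemma mult_0_left: "0 \<cdot> a = a"
proof -
  obtain e where "\<forall>a. e \<cdot> a = a \<and> a \<cdot> e = a"
    using brace unfolding brace_def by blast
  moreover from this have "e = 0"
    using mult_0_right [of e] by metis
  ultimately show ?thesis by simp
qed

lemma mul_one_eq_0: "mul_one m = 0"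
  unfolding mul_one_def
proof (rule the_equality)
  show "\<forall>a. 0 \<cdot> a = a \<and> a \<cdot> 0 = a"
    by (simp add: mult_0_left mult_0_right)
qed (metis mult_0_right)

lemma mult_eq_star: "a \<cdot> b = a + b + a \<star> b"
  by (simp add: star_def)

lemma star_add_right: "a \<star> (b + c) = a \<star> b + a \<star> c"
  by (simp add: star_def mult_add_right algebra_simps)

lemma star_0_right [simp]: "a \<star> 0 = 0"
  using star_add_right [of a 0 0] by simp

lemma star_0_left [simp]: "0 \<star> a = 0"
  by (simp add: star_def mult_0_left)

lemma star_uminus_right: "a \<star> (- b) = - (a \<star> b)"
  using star_add_right [of a b "- b"] by (simp add: minus_unique)

lemma star_zsmul_right: "a \<star> zsmul k b = zsmul k (a \<star> b)"
  by (rule zsmul_additive [where S = UNIV]) (auto simp: add_subgroup_def star_add_right)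

lemma star_mult_left: "(u \<cdot> v) \<star> w = u \<star> (v \<star> w) + v \<star> w + u \<star> w"
proof -
  have "(u \<cdot> v) \<cdot> w = u \<cdot> (v + (w + v \<star> w))"
    by (simp add: mult_assoc mult_eq_star [of v w] add.assoc)
  also have "\<dots> = u \<cdot> v + u \<cdot> w + u \<cdot> (v \<star> w) - u - u"
    by (simp add: mult_add_right algebra_simps)
  finally show ?thesis
    by (simp add: star_def algebra_simps)
qed

lemma star_center_star_left: "z \<in> \<zeta> \<Longrightarrow> z \<star> x = 0"
  and star_center_star_right: "z \<in> \<zeta> \<Longrightarrow> x \<star> z = 0"
  by (simp_all add: star_center_def)

lemma zero_in_star_center: "0 \<in> \<zeta>"
  by (simp add: star_center_def)

lemma uminus_in_star_center:
  assumes "z \<in> \<zeta>"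
  shows "- z \<in> \<zeta>"
proof -
  have "z \<cdot> (- z) = 0"
    using assms by (simp add: mult_eq_star star_center_star_left)
  then have "(- z) \<star> w = 0" for w
    using star_mult_left [of z "- z" w] assms by (simp add: star_center_star_left)
  moreover have "x \<star> (- z) = 0" for x
    using assms by (simp add: star_uminus_right star_center_star_right)
  ultimately show ?thesis
    by (simp add: star_center_def)
qed

lemma star_add_left:
  assumes "\<And>y. u \<star> y \<in> \<zeta>"
  shows "(u + v) \<star> w = u \<star> (v \<star> w) + v \<star> w + u \<star> w"
proof -
  define t where "t = u \<star> v"
  have t: "t \<in> \<zeta>" "- t \<in> \<zeta>"
    using assms uminus_in_star_center by (simp_all add: t_def)
  have "v \<cdot> (- t) = v - t"
    using t by (simp add: mult_eq_star star_center_star_right)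
  moreover have "u \<cdot> (v - t) = u + v"
    using star_add_right [of u v "- t"] t
    by (simp add: mult_eq_star star_uminus_right star_center_star_right t_def)
  ultimately have "(u + v) \<star> w = (u \<cdot> (v \<cdot> (- t))) \<star> w"
    by simp
  also have "\<dots> = u \<star> ((v \<cdot> (- t)) \<star> w) + (v \<cdot> (- t)) \<star> w + u \<star> w"
    by (rule star_mult_left)
  also have "(v \<cdot> (- t)) \<star> w = v \<star> w"
    using star_mult_left [of v "- t" w] t by (simp add: star_center_star_left)
  finally show ?thesis .
qed

lemma add_subgroup_star_center: "add_subgroup \<zeta>"
proof (rule add_subgroupI)
  fix z z' assume "z \<in> \<zeta>" "z' \<in> \<zeta>"
  then show "z + z' \<in> \<zeta>"
    using star_add_left [of z z'] zero_in_star_center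
    by (simp add: star_center_def star_add_right)
qed (simp_all add: zero_in_star_center uminus_in_star_center)

lemma star_center2_star_left: "u \<in> \<zeta>\<^sub>2 \<Longrightarrow> u \<star> x \<in> \<zeta>"
  and star_center2_star_right: "u \<in> \<zeta>\<^sub>2 \<Longrightarrow> x \<star> u \<in> \<zeta>"
  by (simp_all add: star_center2_def)

lemma star_center2I: "(\<And>x. u \<star> x \<in> \<zeta>) \<Longrightarrow> (\<And>x. x \<star> u \<in> \<zeta>) \<Longrightarrow> u \<in> \<zeta>\<^sub>2"
  by (simp add: star_center2_def)

lemma star_center_subset_star_center2: "\<zeta> \<subseteq> \<zeta>\<^sub>2"
  by (auto intro!: star_center2I simp: star_center_star_left star_center_star_right zero_in_star_center)

lemma star_add_left_star_center2:
  assumes "u \<in> \<zeta>\<^sub>2" "v \<in> \<zeta>\<^sub>2"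
  shows "(u + v) \<star> w = u \<star> w + v \<star> w"
  using star_add_left [of u v w] assms
  by (simp add: star_center2_star_left star_center2_star_right star_center_star_right)

lemma add_subgroup_star_center2: "add_subgroup \<zeta>\<^sub>2"
proof (rule add_subgroupI)
  show "0 \<in> \<zeta>\<^sub>2"
    using star_center_subset_star_center2 zero_in_star_center by blast
next
  fix u v assume "u \<in> \<zeta>\<^sub>2" "v \<in> \<zeta>\<^sub>2"
  then show "u + v \<in> \<zeta>\<^sub>2"
    by (intro star_center2I)
      (simp_all add: star_add_left_star_center2 star_add_right star_center2_star_left
        star_center2_star_right add_subgroup_add [OF add_subgroup_star_center])
next
  fix u assume u: "u \<in> \<zeta>\<^sub>2"
  show "- u \<in> \<zeta>\<^sub>2"
  proof (rule star_center2I)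
    fix x
    have "0 = u \<star> ((- u) \<star> x) + (- u) \<star> x + u \<star> x"
      using star_add_left [of u "- u" x] u by (simp add: star_center2_star_left)
    then have "(- u) \<star> x = - (u \<star> ((- u) \<star> x)) - u \<star> x"
      by (simp add: algebra_simps eq_neg_iff_add_eq_0)
    also have "\<dots> \<in> \<zeta>"
      using u by (simp add: star_center2_star_left add_subgroup_diff add_subgroup_uminus
        add_subgroup_star_center)
    finally show "(- u) \<star> x \<in> \<zeta>" .
  next
    fix x
    show "x \<star> (- u) \<in> \<zeta>"
      using u by (simp add: star_uminus_right star_center2_star_right uminus_in_star_center)
  qed
qed

lemma star_zsmul_left:
  assumes "u \<in> \<zeta>\<^sub>2"
  shows "zsmul k u \<star> w = zsmul k (u \<star> w)"
  by (rule zsmul_additive [where f = "\<lambda>v. v \<star> w", OF add_subgroup_star_center2 assms])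
    (rule star_add_left_star_center2)

lemma mult_inverse_star_center2:
  assumes u: "u \<in> \<zeta>\<^sub>2"
  shows "u \<cdot> (u \<star> u - u) = 0" and "(u \<star> u - u) \<cdot> u = 0"
proof -
  have uu: "u \<star> u \<in> \<zeta>"
    using u by (rule star_center2_star_left)
  then show "u \<cdot> (u \<star> u - u) = 0"
    using star_add_right [of u "u \<star> u" "- u"]
    by (simp add: mult_eq_star star_uminus_right star_center_star_right)
  have "(- u) \<star> u = - (u \<star> u)"
    using star_add_left_star_center2 [OF u add_subgroup_uminus [OF add_subgroup_star_center2 u], of u]
    by (simp add: minus_unique)
  moreover have "(u \<star> u - u) \<star> u = (u \<star> u) \<star> u + (- u) \<star> u"
    using star_add_left_star_center2 [of "u \<star> u" "- u" u] uu u star_center_subset_star_center2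
      add_subgroup_uminus [OF add_subgroup_star_center2 u]
    by auto
  ultimately show "(u \<star> u - u) \<cdot> u = 0"
    using uu by (simp add: mult_eq_star star_center_star_left)
qed

lemma subbrace_if_subset_star_center2:
  assumes S: "add_subgroup S" "S \<subseteq> \<zeta>\<^sub>2" and star_closed: "\<And>x y. x \<in> S \<Longrightarrow> y \<in> S \<Longrightarrow> x \<star> y \<in> S"
  shows "subbrace m S"
  unfolding subbrace_def mul_one_eq_0
proof (intro conjI ballI)
  fix x y assume "x \<in> S" "y \<in> S"
  then show "x \<cdot> y \<in> S"
    using S(1) star_closed by (simp add: mult_eq_star add_subgroup_add)
next
  fix x assume x: "x \<in> S"
  then have "x \<star> x - x \<in> S"
    using S(1) star_closed by (simp add: add_subgroup_diff)
  then show "\<exists>y\<in>S. x \<cdot> y = 0 \<and> y \<cdot> x = 0"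
    using mult_inverse_star_center2 x S(2) by blast
qed (use S(1) in \<open>simp_all add: add_subgroup_def\<close>)

lemma ideal_of_UNIV_if_between_star_centers:
  assumes S: "add_subgroup S" "\<zeta> \<subseteq> S" "S \<subseteq> \<zeta>\<^sub>2"
  shows "ideal_of m UNIV S"
proof -
  have "x \<star> s \<in> S" "s \<star> x \<in> S" if "s \<in> S" for s x
    using that S star_center2_star_left star_center2_star_right by blast+
  then show ?thesis
    using subbrace_if_subset_star_center2 [OF S(1,3)] by (simp add: ideal_of_def)
qed

context
  fixes a :: 'a
  assumes a: "a \<in> \<zeta>\<^sub>2"
begin

lemma add_cyclic_plus_star_center_subset: "add_cyclic a + \<zeta> \<subseteq> \<zeta>\<^sub>2"
  using add_cyclic_subset [OF add_subgroup_star_center2 a] star_center_subset_star_center2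
  by (rule set_plus_subset [OF add_subgroup_star_center2])

lemma star_add_cyclic_plus_star_center:
  assumes "u \<in> add_cyclic a + \<zeta>" "v \<in> add_cyclic a + \<zeta>"
  shows "u \<star> v \<in> add_cyclic (a \<star> a)"
proof -
  obtain k z where u: "u = zsmul k a + z" "z \<in> \<zeta>"
    using assms(1) by (auto elim!: set_plus_elim simp: add_cyclic_def)
  obtain l z' where v: "v = zsmul l a + z'" "z' \<in> \<zeta>"
    using assms(2) by (auto elim!: set_plus_elim simp: add_cyclic_def)
  have "u \<star> a = zsmul k (a \<star> a)"
    using u star_add_left_star_center2 [of "zsmul k a" z a] star_zsmul_left [OF a]
      zsmul_closed [OF add_subgroup_star_center2 a] star_center_subset_star_center2
    by (auto simp: star_center_star_left)
  then have "u \<star> v = zsmul (l * k) (a \<star> a)"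
    using v by (simp add: star_add_right star_zsmul_right star_center_star_right zsmul_mult)
  then show ?thesis
    by auto
qed

lemma ideal_of_add_cyclic_plus_star_center: "ideal_of m UNIV (add_cyclic a + \<zeta>)"
proof (rule ideal_of_UNIV_if_between_star_centers)
  show "add_subgroup (add_cyclic a + \<zeta>)"
    by (simp add: add_subgroup_set_plus add_subgroup_add_cyclic add_subgroup_star_center)
  show "\<zeta> \<subseteq> add_cyclic a + \<zeta>"
    by (simp add: set_zero_plus2 add_subgroup_zero add_subgroup_add_cyclic)
qed (rule add_cyclic_plus_star_center_subset)

lemma ideal_of_add_cyclic_plus_add_cyclic_star:
  "ideal_of m (add_cyclic a + \<zeta>) (add_cyclic a + add_cyclic (a \<star> a))"
proof -
  let ?J = "add_cyclic a + \<zeta>" and ?I = "add_cyclic a + add_cyclic (a \<star> a)"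
  have "add_cyclic (a \<star> a) \<subseteq> \<zeta>"
    using a by (simp add: add_cyclic_subset add_subgroup_star_center star_center2_star_left)
  then have IJ: "?I \<subseteq> ?J"
    by (simp add: set_plus_mono2)
  have "add_cyclic (a \<star> a) \<subseteq> ?I"
    by (simp add: set_zero_plus2 add_subgroup_zero add_subgroup_add_cyclic)
  then have star_J: "u \<star> v \<in> ?I" if "u \<in> ?J" "v \<in> ?J" for u v
    using star_add_cyclic_plus_star_center that by blast
  have "subbrace m ?I"
  proof (rule subbrace_if_subset_star_center2)
    show "add_subgroup ?I"
      by (simp add: add_subgroup_set_plus add_subgroup_add_cyclic)
    show "?I \<subseteq> \<zeta>\<^sub>2"
      using IJ add_cyclic_plus_star_center_subset by blast
  qed (use IJ star_J in blast)
  with IJ star_J show ?thesis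
    unfolding ideal_of_def by blast
qed

lemma mem_add_cyclic_star_if_torsion_over_star_center:
  assumes inf: "infinite_add_order a"
    and d: "d \<in> add_cyclic a + add_cyclic (a \<star> a)" "d \<in> \<zeta>"
    and torsion: "\<And>k. zsmul k a \<in> \<zeta> \<Longrightarrow> zsmul k d = 0"
  shows "d \<in> add_cyclic (a \<star> a)"
proof -
  obtain n r where dn: "d = zsmul n a + zsmul r (a \<star> a)"
    using d(1) by (auto elim!: set_plus_elim simp: add_cyclic_def)
  have "zsmul r (a \<star> a) \<in> \<zeta>"
    using a by (simp add: zsmul_closed add_subgroup_star_center star_center2_star_left)
  with d(2) have "zsmul n a \<in> \<zeta>"
    using add_subgroup_diff [OF add_subgroup_star_center] by (force simp: dn)
  then have "zsmul n (a \<star> a) = 0" "zsmul n d = 0"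
    using torsion by (simp_all add: star_center_star_right flip: star_zsmul_right)
  moreover from this have "zsmul n (zsmul r (a \<star> a)) = 0"
    by (metis zsmul_mult mult.commute zsmul_0_right)
  ultimately have "zsmul (n * n) a = 0"
    by (simp add: dn zsmul_add_right zsmul_mult)
  then have "n = 0"
    using inf by (simp add: zsmul_eq_0_iff_infinite_add_order)
  then show ?thesis
    by (simp add: dn zsmul_mem_add_cyclic)
qed

lemma stars_mem_add_cyclic_star_if_ideal:
  assumes inf: "infinite_add_order a"
    and ideal: "ideal_of m UNIV (add_cyclic a + add_cyclic (a \<star> a))"
  shows "x \<star> a \<in> add_cyclic (a \<star> a)" and "a \<star> x \<in> add_cyclic (a \<star> a)"
proof -
  have "a \<in> add_cyclic a + add_cyclic (a \<star> a)"
    using set_plus_intro [OF mem_add_cyclic_self zsmul_mem_add_cyclic [of 0]] by simp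
  with ideal have in_I: "x \<star> a \<in> add_cyclic a + add_cyclic (a \<star> a)"
      "a \<star> x \<in> add_cyclic a + add_cyclic (a \<star> a)"
    unfolding ideal_of_def by blast+
  show "x \<star> a \<in> add_cyclic (a \<star> a)"
  proof (rule mem_add_cyclic_star_if_torsion_over_star_center [OF inf in_I(1)])
    show "x \<star> a \<in> \<zeta>"
      using a by (rule star_center2_star_right)
    show "zsmul k (x \<star> a) = 0" if "zsmul k a \<in> \<zeta>" for k
      using that by (simp add: star_center_star_right flip: star_zsmul_right)
  qed
  show "a \<star> x \<in> add_cyclic (a \<star> a)"
  proof (rule mem_add_cyclic_star_if_torsion_over_star_center [OF inf in_I(2)])
    show "a \<star> x \<in> \<zeta>"
      using a by (rule star_center2_star_left)
    show "zsmul k (a \<star> x) = 0" if "zsmul k a \<in> \<zeta>" for k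
      using that by (simp add: star_center_star_left flip: star_zsmul_left [OF a])
  qed
qed

end

end

theorem lemma4p3:
  fixes m :: "'a::ab_group_add \<Rightarrow> 'a \<Rightarrow> 'a" and a :: 'a
  assumes "T_brace m"
    and "a \<in> star_center2 m"
    and "infinite_add_order a"
  shows "\<forall>x. star m x a \<in> add_cyclic (star m a a) \<and> star m a x \<in> add_cyclic (star m a a)"
proof -
  interpret left_brace m
    using assms(1) by (simp add: T_brace_def left_brace_def)
  have "ideal_of m UNIV (add_cyclic a + add_cyclic (a \<star> a))"
    using assms(1) ideal_of_add_cyclic_plus_star_center [OF assms(2)]
      ideal_of_add_cyclic_plus_add_cyclic_star [OF assms(2)]
    unfolding T_brace_def by blast
  then show ?thesis
    using stars_mem_add_cyclic_star_if_ideal [OF assms(2,3)] by blast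
qed

end
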